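(* Let $(\gamma_j)_{j\ge1}$ be a sequence with $1\ge\gamma_1\ge\gamma_2\ge\cdots\ge0$ and product weights $\gamma_{\mathfrak u}=\prod_{j\in\mathfrak u}\gamma_j$, and assume there is $c>0$ with $\gamma_j\ge c$ for all $j\in\mathbb N$. Then for all $\varepsilon\in(0,1)$ and all $d\in\mathbb N$, $N_{\boldsymbol\gamma}(\varepsilon,d)\ge\left(\frac{c}{4\varepsilon}\right)^d$. In particular, the $\boldsymbol\gamma$-weighted star discrepancy of the centered regular grid suffers from the curse of dimensionality (and this holds in particular for the classical star discrepancy, i.e. $\gamma_j=1$ for all $j$).
   Context: Write $[d]=\{1,\dots,d\}$. For $m_1,\dots,m_d\in\mathbb N$ the centered regular grid is $\Gamma_{m_1,\dots,m_d}=\{(\frac{2\ell_1+1}{2m_1},\dots,\frac{2\ell_d+1}{2m_d}) : \ell_j\in\{0,\dots,m_j-1\}\}$, with $N=m_1\cdots m_d$ points. For an $N$-point set $\mathcal P_d\subset[0,1)^d$ with real coefficients $\mathcal A(\mathcal P_d)=\{a_{\boldsymbol x}\}$, the local discrepancy is $\Delta_{\mathcal P_d,\mathcal A(\mathcal P_d)}(\boldsymbol\alpha)=\sum_{\boldsymbol x\in\mathcal P_d}a_{\boldsymbol x}\mathbf 1_{[\boldsymbol 0,\boldsymbol\alpha)}(\boldsymbol x)-\prod_{j=1}^d\alpha_j$, $\boldsymbol\alpha\in[0,1]^d$, and the $\boldsymbol\gamma$-weighted star discrepancy is $D^*_{N,\boldsymbol\gamma}(\mathcal P_d,\mathcal A(\mathcal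 P_d))=\sup_{\boldsymbol\alpha\in[0,1]^d}\max_{\emptyset\ne\mathfrak u\subseteq[d]}\gamma_{\mathfrak u}|\Delta_{\mathcal P_d,\mathcal A(\mathcal P_d)}((\boldsymbol\alpha_{\mathfrak u},\boldsymbol 1))|$, where $(\boldsymbol\alpha_{\mathfrak u},\boldsymbol 1)$ has $j$-th coordinate $\alpha_j$ for $j\in\mathfrak u$ and $1$ otherwise. For $\varepsilon\in(0,1)$, $d\in\mathbb N$, $N_{\boldsymbol\gamma}(\varepsilon,d)=\min\{N: N=m_1\cdots m_d \text{ and there exist coefficients } \mathcal A(\Gamma_{m_1,\dots,m_d}) \text{ with } D^*_{N,\boldsymbol\gamma}(\Gamma_{m_1,\dots,m_d},\mathcal A(\Gamma_{m_1,\dots,m_d}))\le\varepsilon\}$. The discrepancy suffers from the curse of dimensionality if there exist $C,\varepsilon_0,\tau>0$ with $N_{\boldsymbol\gamma}(\varepsilon,d)\ge C(1+\tau)^d$ for all $\varepsilon\le\varepsilon_0$ and infinitely many $d\in\mathbb N$. *)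

theory Defs
  imports Complex_Main
begin

text \<open>Points of [0,1)^d are modelled as functions nat => real; coordinates are
  indexed by {1..d}, and all other coordinates are 0.\<close>

definition centered_grid :: "nat \<Rightarrow> (nat \<Rightarrow> nat) \<Rightarrow> (nat \<Rightarrow> real) set" where
  "centered_grid d m = {x. (\<forall>j\<in>{1..d}. \<exists>l<m j. x j = (2 * real l + 1) / (2 * real (m j)))
                          \<and> (\<forall>j. j \<notin> {1..d} \<longrightarrow> x j = 0)}"

definition local_disc ::
  "nat \<Rightarrow> (nat \<Rightarrow> real) set \<Rightarrow> ((nat \<Rightarrow> real) \<Rightarrow> real) \<Rightarrow> (nat \<Rightarrow> real) \<Rightarrow> real" where
  "local_disc d P a \<alpha> =
     (\<Sum>x\<in>P. a x * (if (\<forall>j\<in>{1..d}. 0 \<le> x j \<and> x j < \<alpha> j) then 1 else 0))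
     - (\<Prod>j\<in>{1..d}. \<alpha> j)"

definition restr_one :: "nat set \<Rightarrow> (nat \<Rightarrow> real) \<Rightarrow> (nat \<Rightarrow> real)" where
  "restr_one u \<alpha> = (\<lambda>j. if j \<in> u then \<alpha> j else 1)"

definition weighted_star_disc ::
  "(nat set \<Rightarrow> real) \<Rightarrow> nat \<Rightarrow> (nat \<Rightarrow> real) set \<Rightarrow> ((nat \<Rightarrow> real) \<Rightarrow> real) \<Rightarrow> real" where
  "weighted_star_disc w d P a =
     Sup {w u * \<bar>local_disc d P a (restr_one u \<alpha>)\<bar> | u \<alpha>.
            u \<noteq> {} \<and> u \<subseteq> {1..d} \<and> (\<forall>j\<in>{1..d}. 0 \<le> \<alpha> j \<and> \<alpha> j \<le> 1)}"

definition product_weights :: "(nat \<Rightarrow> real) \<Rightarrow> nat set \<Rightarrow> real" where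
  "product_weights \<gamma> u = (\<Prod>j\<in>u. \<gamma> j)"

definition N_grid :: "(nat set \<Rightarrow> real) \<Rightarrow> real \<Rightarrow> nat \<Rightarrow> nat" where
  "N_grid w \<epsilon> d = Inf {N. \<exists>m. (\<forall>j\<in>{1..d}. 1 \<le> m j) \<and> N = (\<Prod>j\<in>{1..d}. m j) \<and>
         (\<exists>a. weighted_star_disc w d (centered_grid d m) a \<le> \<epsilon>)}"

definition curse_of_dim :: "(real \<Rightarrow> nat \<Rightarrow> nat) \<Rightarrow> bool" where
  "curse_of_dim Nf \<longleftrightarrow> (\<exists>C \<epsilon>0 \<tau>. C > 0 \<and> \<epsilon>0 > 0 \<and> \<tau> > 0 \<and>
      (\<forall>\<epsilon>. 0 < \<epsilon> \<and> \<epsilon> < 1 \<and> \<epsilon> \<le> \<epsilon>0 \<longrightarrow>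
         infinite {d::nat. d \<ge> 1 \<and> real (Nf \<epsilon> d) \<ge> C * (1 + \<tau>) ^ d}))"

end

theory Submission
  imports Defs "HOL-Library.FuncSet"
begin

(* A box whose side in direction j is 1/(2 m_j) and which is full in all other directions
   contains no point of the centered grid, so whatever the coefficients its local discrepancy
   is minus its volume 1/(2 m_j). With weight gamma_j >= c, discrepancy at most eps therefore
   forces m_j >= c/(2 eps) in every direction, and N = m_1 ... m_d >= (c/(2 eps))^d; for
   eps <= c/8 this is at least 2^d. The bound on N is not vacuous: equal coefficients 1/N
   on a grid with M points per direction have discrepancy at most d/(2M), because the
   counting part of the local discrepancy factorises over the coordinates. *)

lemma card_centered_points_below:
  fixes m :: nat and \<alpha> :: real
  assumes "m \<ge> 1" "0 \<le> \<alpha>" "\<alpha> \<le> 1"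
  shows "\<bar>real (card {l. l < m \<and> (2 * real l + 1) / (2 * real m) < \<alpha>}) - real m * \<alpha>\<bar> \<le> 1 / 2"
proof -
  define t where "t = real m * \<alpha> - 1 / 2"
  define k where "k = min m (nat \<lceil>t\<rceil>)"
  have "(2 * real l + 1) / (2 * real m) < \<alpha> \<longleftrightarrow> l < nat \<lceil>t\<rceil>" for l
  proof -
    have "(2 * real l + 1) / (2 * real m) < \<alpha> \<longleftrightarrow> int l < \<lceil>t\<rceil>"
      using assms(1) by (simp add: t_def field_simps less_ceiling_iff)
    then show ?thesis by linarith
  qed
  then have "{l. l < m \<and> (2 * real l + 1) / (2 * real m) < \<alpha>} = {..<k}"
    by (simp add: k_def set_eq_iff)
  moreover have "\<bar>real k - real m * \<alpha>\<bar> \<le> 1 / 2"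
  proof (cases "nat \<lceil>t\<rceil> \<le> m")
    case True
    then have k: "real k = max 0 (of_int \<lceil>t\<rceil>)" unfolding k_def by simp
    have "t \<le> of_int \<lceil>t\<rceil>" "of_int \<lceil>t\<rceil> < t + 1" by linarith+
    moreover have "0 \<le> real m * \<alpha>" using assms(2) by simp
    ultimately show ?thesis unfolding k t_def by linarith
  next
    case False
    then have "k = m" "t > real m - 1" unfolding k_def by linarith+
    moreover have "real m * \<alpha> \<le> real m" using assms(3) by (simp add: mult_left_le)
    ultimately show ?thesis unfolding t_def by simp
  qed
  ultimately show ?thesis by simp
qed

lemma abs_prod_diff_le_sum_abs_diff:
  fixes x y :: "'a \<Rightarrow> 'b :: linordered_idom"
  assumes "\<And>i. i \<in> I \<Longrightarrow> 0 \<le> x i \<and> x i \<le> 1" "\<And>i. i \<in> I \<Longrightarrow> 0 \<le> y i \<and> y i \<le> 1"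
  shows "\<bar>prod x I - prod y I\<bar> \<le> (\<Sum>i\<in>I. \<bar>x i - y i\<bar>)"
proof (cases "finite I")
  case True
  then show ?thesis using assms
  proof (induction I rule: finite_induct)
    case (insert a F)
    have y: "0 \<le> prod y F" "prod y F \<le> 1" using insert.prems by (auto intro: prod_nonneg prod_le_1)
    have x: "0 \<le> x a" "x a \<le> 1" using insert.prems by auto
    have "x a * prod x F - y a * prod y F = x a * (prod x F - prod y F) + (x a - y a) * prod y F"
      by (simp add: algebra_simps)
    then have "\<bar>x a * prod x F - y a * prod y F\<bar> \<le> \<bar>x a\<bar> * \<bar>prod x F - prod y F\<bar> + \<bar>x a - y a\<bar> * \<bar>prod y F\<bar>"
      by (metis abs_mult abs_triangle_ineq)
    also have "\<dots> \<le> \<bar>prod x F - prod y F\<bar> + \<bar>x a - y a\<bar>"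
      using x y by (intro add_mono) (auto intro: mult_left_le_one_le mult_right_le_one_le)
    finally show ?case using insert by simp
  qed simp
qed simp

definition grid_point :: "nat \<Rightarrow> (nat \<Rightarrow> nat) \<Rightarrow> (nat \<Rightarrow> nat) \<Rightarrow> nat \<Rightarrow> real" where
  "grid_point d m l = (\<lambda>j. if j \<in> {1..d} then (2 * real (l j) + 1) / (2 * real (m j)) else 0)"

lemma grid_point_image_PiE:
  "grid_point d m ` PiE {1..d} A =
     {x. (\<forall>j\<in>{1..d}. \<exists>l\<in>A j. x j = (2 * real l + 1) / (2 * real (m j))) \<and> (\<forall>j. j \<notin> {1..d} \<longrightarrow> x j = 0)}"
  (is "_ = ?G")
proof
  show "?G \<subseteq> grid_point d m ` PiE {1..d} A"
  proof
    fix x assume x: "x \<in> ?G"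
    then have "\<forall>j\<in>{1..d}. \<exists>l. l \<in> A j \<and> x j = (2 * real l + 1) / (2 * real (m j))" by blast
    from bchoice[OF this] obtain L
      where L: "\<forall>j\<in>{1..d}. L j \<in> A j \<and> x j = (2 * real (L j) + 1) / (2 * real (m j))" by blast
    then have "x = grid_point d m (restrict L {1..d})" "restrict L {1..d} \<in> PiE {1..d} A"
      using x by (auto simp: grid_point_def fun_eq_iff)
    then show "x \<in> grid_point d m ` PiE {1..d} A" by blast
  qed
qed (auto simp: grid_point_def)

lemma inj_on_grid_point:
  assumes "\<forall>j\<in>{1..d}. 1 \<le> m j"
  shows "inj_on (grid_point d m) (PiE {1..d} A)"
proof (rule inj_onI)
  fix l l' assume l: "l \<in> PiE {1..d} A" "l' \<in> PiE {1..d} A" and eq: "grid_point d m l = grid_point d m l'"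
  have "l j = l' j" if j: "j \<in> {1..d}" for j
  proof -
    have "(2 * real (l j) + 1) / (2 * real (m j)) = (2 * real (l' j) + 1) / (2 * real (m j))"
      using fun_cong[OF eq, of j] j by (simp add: grid_point_def)
    moreover have "m j \<noteq> 0" using assms j by fastforce
    ultimately show ?thesis by (simp add: field_simps)
  qed
  then show "l = l'" using l by (auto intro: PiE_ext)
qed

lemma centered_grid_eq_image:
  "centered_grid d m = grid_point d m ` PiE {1..d} (\<lambda>j. {..<m j})"
  unfolding grid_point_image_PiE centered_grid_def by auto

lemma finite_centered_grid: "finite (centered_grid d m)"
  unfolding centered_grid_eq_image by (intro finite_imageI finite_PiE) auto

lemma centered_grid_box_eq_image:
  "{x \<in> centered_grid d m. \<forall>j\<in>{1..d}. 0 \<le> x j \<and> x j < \<beta> j} =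
     grid_point d m ` PiE {1..d} (\<lambda>j. {l. l < m j \<and> (2 * real l + 1) / (2 * real (m j)) < \<beta> j})"
  unfolding grid_point_image_PiE centered_grid_def by fastforce

lemma card_centered_grid_box:
  assumes "\<forall>j\<in>{1..d}. 1 \<le> m j"
  shows "card {x \<in> centered_grid d m. \<forall>j\<in>{1..d}. 0 \<le> x j \<and> x j < \<beta> j} =
           (\<Prod>j\<in>{1..d}. card {l. l < m j \<and> (2 * real l + 1) / (2 * real (m j)) < \<beta> j})"
  unfolding centered_grid_box_eq_image
  by (subst card_image[OF inj_on_grid_point[OF assms]]) (simp add: card_PiE)

lemma abs_local_disc_centered_grid_le:
  assumes m: "\<forall>j\<in>{1..d}. 1 \<le> m j" and \<beta>: "\<forall>j\<in>{1..d}. 0 \<le> \<beta> j \<and> \<beta> j \<le> 1"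
  shows "\<bar>local_disc d (centered_grid d m) (\<lambda>_. 1 / (\<Prod>j\<in>{1..d}. real (m j))) \<beta>\<bar>
           \<le> (\<Sum>j\<in>{1..d}. 1 / (2 * real (m j)))"
proof -
  define A where "A j = {l. l < m j \<and> (2 * real l + 1) / (2 * real (m j)) < \<beta> j}" for j
  define Q where "Q = {x \<in> centered_grid d m. \<forall>j\<in>{1..d}. 0 \<le> x j \<and> x j < \<beta> j}"
  have card_A: "card (A j) \<le> m j" for j
    using card_mono[of "{..<m j}" "A j"] by (auto simp: A_def)
  have "(\<Sum>x\<in>centered_grid d m. 1 / (\<Prod>j\<in>{1..d}. real (m j)) *
            (if \<forall>j\<in>{1..d}. 0 \<le> x j \<and> x j < \<beta> j then 1 else 0))
        = (\<Sum>x\<in>Q. 1 / (\<Prod>j\<in>{1..d}. real (m j)))"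
    unfolding Q_def sum.inter_filter[OF finite_centered_grid] by (intro sum.cong) auto
  also have "\<dots> = real (card Q) / (\<Prod>j\<in>{1..d}. real (m j))" by simp
  also have "\<dots> = (\<Prod>j\<in>{1..d}. real (card (A j)) / real (m j))"
    unfolding Q_def card_centered_grid_box[OF m] A_def by (simp add: prod_dividef)
  finally have "\<bar>local_disc d (centered_grid d m) (\<lambda>_. 1 / (\<Prod>j\<in>{1..d}. real (m j))) \<beta>\<bar>
      = \<bar>(\<Prod>j\<in>{1..d}. real (card (A j)) / real (m j)) - (\<Prod>j\<in>{1..d}. \<beta> j)\<bar>"
    unfolding local_disc_def by simp
  also have "\<dots> \<le> (\<Sum>j\<in>{1..d}. \<bar>real (card (A j)) / real (m j) - \<beta> j\<bar>)"
    using m \<beta> card_A by (intro abs_prod_diff_le_sum_abs_diff) (force simp: divide_le_eq_1)+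
  also have "\<dots> \<le> (\<Sum>j\<in>{1..d}. 1 / (2 * real (m j)))"
  proof (rule sum_mono)
    fix j assume j: "j \<in> {1..d}"
    have "\<bar>real (card (A j)) - real (m j) * \<beta> j\<bar> \<le> 1 / 2"
      unfolding A_def using m \<beta> j by (intro card_centered_points_below) auto
    moreover have mj: "real (m j) > 0" using m j by force
    ultimately have "\<bar>real (card (A j)) - real (m j) * \<beta> j\<bar> / real (m j) \<le> (1 / 2) / real (m j)"
      by (intro divide_right_mono) auto
    moreover have "real (card (A j)) / real (m j) - \<beta> j = (real (card (A j)) - real (m j) * \<beta> j) / real (m j)"
      using mj by (simp add: field_simps)
    ultimately show "\<bar>real (card (A j)) / real (m j) - \<beta> j\<bar> \<le> 1 / (2 * real (m j))"
      by (simp add: abs_div)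
  qed
  finally show ?thesis .
qed

lemma abs_local_disc_le:
  assumes "\<forall>j\<in>{1..d}. 0 \<le> \<beta> j \<and> \<beta> j \<le> 1"
  shows "\<bar>local_disc d P a \<beta>\<bar> \<le> (\<Sum>x\<in>P. \<bar>a x\<bar>) + 1"
proof -
  have "\<bar>\<Sum>x\<in>P. a x * (if \<forall>j\<in>{1..d}. 0 \<le> x j \<and> x j < \<beta> j then 1 else 0)\<bar> \<le> (\<Sum>x\<in>P. \<bar>a x\<bar>)"
    by (rule order_trans[OF sum_abs sum_mono]) simp
  moreover have "0 \<le> (\<Prod>j\<in>{1..d}. \<beta> j)" "(\<Prod>j\<in>{1..d}. \<beta> j) \<le> 1"
    using assms by (auto intro: prod_nonneg prod_le_1)
  ultimately show ?thesis unfolding local_disc_def by linarith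
qed

lemma weighted_star_disc_le:
  assumes "d \<ge> 1"
    and "\<And>u \<alpha>. u \<noteq> {} \<Longrightarrow> u \<subseteq> {1..d} \<Longrightarrow> \<forall>j\<in>{1..d}. 0 \<le> \<alpha> j \<and> \<alpha> j \<le> 1 \<Longrightarrow>
           w u * \<bar>local_disc d P a (restr_one u \<alpha>)\<bar> \<le> B"
  shows "weighted_star_disc w d P a \<le> B"
  unfolding weighted_star_disc_def
proof (rule cSup_least)
  have "w {1} * \<bar>local_disc d P a (restr_one {1} (\<lambda>_. 0))\<bar> \<in>
      {w u * \<bar>local_disc d P a (restr_one u \<alpha>)\<bar> | u \<alpha>.
         u \<noteq> {} \<and> u \<subseteq> {1..d} \<and> (\<forall>j\<in>{1..d}. 0 \<le> \<alpha> j \<and> \<alpha> j \<le> 1)}"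
    using assms(1) by fastforce
  then show "{w u * \<bar>local_disc d P a (restr_one u \<alpha>)\<bar> | u \<alpha>.
         u \<noteq> {} \<and> u \<subseteq> {1..d} \<and> (\<forall>j\<in>{1..d}. 0 \<le> \<alpha> j \<and> \<alpha> j \<le> 1)} \<noteq> {}" by blast
qed (use assms(2) in blast)

text \<open>Weights at most 1 keep the set under the supremum bounded, so that the supremum is an
  honest upper bound (the real supremum of an unbounded set is an arbitrary value).\<close>

lemma weighted_star_disc_ge:
  assumes "\<And>u. u \<subseteq> {1..d} \<Longrightarrow> w u \<le> 1"
    and "u \<noteq> {}" "u \<subseteq> {1..d}" "\<forall>j\<in>{1..d}. 0 \<le> \<alpha> j \<and> \<alpha> j \<le> 1"
  shows "w u * \<bar>local_disc d P a (restr_one u \<alpha>)\<bar> \<le> weighted_star_disc w d P a"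
  unfolding weighted_star_disc_def
proof (rule cSup_upper)
  show "bdd_above {w u * \<bar>local_disc d P a (restr_one u \<alpha>)\<bar> | u \<alpha>.
         u \<noteq> {} \<and> u \<subseteq> {1..d} \<and> (\<forall>j\<in>{1..d}. 0 \<le> \<alpha> j \<and> \<alpha> j \<le> 1)}"
  proof (rule bdd_aboveI[where M = "(\<Sum>x\<in>P. \<bar>a x\<bar>) + 1"], clarify)
    fix v and \<beta> :: "nat \<Rightarrow> real" assume v: "v \<subseteq> {1..d}" and \<beta>: "\<forall>j\<in>{1..d}. 0 \<le> \<beta> j \<and> \<beta> j \<le> 1"
    have "w v * \<bar>local_disc d P a (restr_one v \<beta>)\<bar> \<le> 1 * \<bar>local_disc d P a (restr_one v \<beta>)\<bar>"
      using assms(1)[OF v] by (intro mult_right_mono) auto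
    also have "\<dots> \<le> (\<Sum>x\<in>P. \<bar>a x\<bar>) + 1"
      using \<beta> abs_local_disc_le[of d "restr_one v \<beta>" P a] by (simp add: restr_one_def)
    finally show "w v * \<bar>local_disc d P a (restr_one v \<beta>)\<bar> \<le> (\<Sum>x\<in>P. \<bar>a x\<bar>) + 1" .
  qed
qed (use assms(2-) in blast)

lemma exists_centered_grid_weighted_star_disc_le:
  assumes d: "d \<ge> 1" and \<epsilon>: "\<epsilon> > 0" and w: "\<And>u. u \<subseteq> {1..d} \<Longrightarrow> w u \<le> 1"
  shows "\<exists>m a. (\<forall>j\<in>{1..d}. 1 \<le> m j) \<and> weighted_star_disc w d (centered_grid d m) a \<le> \<epsilon>"
proof -
  define M :: nat where "M = nat \<lceil>real d / \<epsilon>\<rceil> + 1"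
  define m :: "nat \<Rightarrow> nat" where "m = (\<lambda>_. M)"
  have m: "\<forall>j\<in>{1..d}. 1 \<le> m j" by (simp add: m_def M_def)
  have "real d / \<epsilon> \<le> real M" unfolding M_def by linarith
  then have "real d \<le> \<epsilon> * real M" using \<epsilon> by (simp add: divide_le_eq mult.commute)
  moreover have "real M > 0" by (simp add: M_def)
  ultimately have dM: "real d / (2 * real M) \<le> \<epsilon>" using \<epsilon> by (simp add: field_simps)
  have "weighted_star_disc w d (centered_grid d m) (\<lambda>_. 1 / (\<Prod>j\<in>{1..d}. real (m j))) \<le> \<epsilon>"
  proof (rule weighted_star_disc_le[OF d])
    fix u and \<alpha> :: "nat \<Rightarrow> real" assume u: "u \<subseteq> {1..d}" and \<alpha>: "\<forall>j\<in>{1..d}. 0 \<le> \<alpha> j \<and> \<alpha> j \<le> 1"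
    let ?D = "\<bar>local_disc d (centered_grid d m) (\<lambda>_. 1 / (\<Prod>j\<in>{1..d}. real (m j))) (restr_one u \<alpha>)\<bar>"
    have "w u * ?D \<le> 1 * ?D" using w[OF u] by (intro mult_right_mono) auto
    also have "\<dots> \<le> (\<Sum>j\<in>{1..d}. 1 / (2 * real (m j)))"
      unfolding mult_1
      by (intro abs_local_disc_centered_grid_le[OF m]) (use \<alpha> in \<open>auto simp: restr_one_def\<close>)
    also have "\<dots> = real d / (2 * real M)" by (simp add: m_def)
    finally show "w u * ?D \<le> \<epsilon>" using dM by linarith
  qed
  then show ?thesis using m by blast
qed

lemma weight_div_le_weighted_star_disc_centered_grid:
  assumes w: "\<And>u. u \<subseteq> {1..d} \<Longrightarrow> w u \<le> 1" and m: "\<forall>j\<in>{1..d}. 1 \<le> m j" and j: "j \<in> {1..d}"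
  shows "w {j} / (2 * real (m j)) \<le> weighted_star_disc w d (centered_grid d m) a"
proof -
  define \<alpha> :: "nat \<Rightarrow> real" where "\<alpha> = (\<lambda>_. 1 / (2 * real (m j)))"
  have mj: "real (m j) \<ge> 1" using m j by simp
  have empty_box: "\<not> x j < restr_one {j} \<alpha> j" if x: "x \<in> centered_grid d m" for x
  proof -
    from x j have "\<exists>l<m j. x j = (2 * real l + 1) / (2 * real (m j))"
      by (simp add: centered_grid_def)
    then obtain l where "x j = (2 * real l + 1) / (2 * real (m j))" by blast
    moreover have "1 / (2 * real (m j)) \<le> (2 * real l + 1) / (2 * real (m j))"
      using mj by (intro divide_right_mono) auto
    ultimately show ?thesis by (simp add: restr_one_def \<alpha>_def)
  qed
  have "(\<Prod>i\<in>{1..d}. restr_one {j} \<alpha> i) = (\<Prod>i\<in>{1..d}. if i = j then 1 / (2 * real (m j)) else 1)"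
    by (rule prod.cong) (auto simp: restr_one_def \<alpha>_def)
  also have "\<dots> = 1 / (2 * real (m j))" using j by (simp add: prod.delta)
  finally have "(\<Prod>i\<in>{1..d}. restr_one {j} \<alpha> i) = 1 / (2 * real (m j))" .
  moreover have "(\<Sum>x\<in>centered_grid d m.
      a x * (if \<forall>i\<in>{1..d}. 0 \<le> x i \<and> x i < restr_one {j} \<alpha> i then 1 else 0)) = 0"
    using empty_box j by (intro sum.neutral) (fastforce dest: bspec[where x = j])
  ultimately have "\<bar>local_disc d (centered_grid d m) a (restr_one {j} \<alpha>)\<bar> = 1 / (2 * real (m j))"
    unfolding local_disc_def by simp
  moreover have "w {j} * \<bar>local_disc d (centered_grid d m) a (restr_one {j} \<alpha>)\<bar>
      \<le> weighted_star_disc w d (centered_grid d m) a"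
    using j mj by (intro weighted_star_disc_ge w) (auto simp: \<alpha>_def)
  ultimately show ?thesis by simp
qed

text \<open>The infimum is over a nonempty set of naturals by the preceding existence result;
  otherwise it would be the junk value 0.\<close>

lemma N_grid_ge:
  assumes d: "d \<ge> 1" and \<epsilon>: "\<epsilon> > 0" and c: "c > 0"
    and w: "\<And>u. u \<subseteq> {1..d} \<Longrightarrow> w u \<le> 1" and wc: "\<And>j. j \<in> {1..d} \<Longrightarrow> c \<le> w {j}"
  shows "(c / (2 * \<epsilon>)) ^ d \<le> real (N_grid w \<epsilon> d)"
proof -
  define NS where "NS = {N. \<exists>m. (\<forall>j\<in>{1..d}. 1 \<le> m j) \<and> N = (\<Prod>j\<in>{1..d}. m j) \<and>
         (\<exists>a. weighted_star_disc w d (centered_grid d m) a \<le> \<epsilon>)}"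
  obtain m0 a0 where "\<forall>j\<in>{1..d}. 1 \<le> m0 j" "weighted_star_disc w d (centered_grid d m0) a0 \<le> \<epsilon>"
    using exists_centered_grid_weighted_star_disc_le[of d \<epsilon> w, OF d \<epsilon> w] by blast
  then have "(\<Prod>j\<in>{1..d}. m0 j) \<in> NS" unfolding NS_def by auto
  then have "NS \<noteq> {}" by blast
  then have "Inf NS \<in> NS" by (rule Inf_nat_def1)
  then obtain m a where m: "\<forall>j\<in>{1..d}. 1 \<le> m j" and N: "Inf NS = (\<Prod>j\<in>{1..d}. m j)"
      and disc: "weighted_star_disc w d (centered_grid d m) a \<le> \<epsilon>"
    unfolding NS_def by blast
  have "c / (2 * \<epsilon>) \<le> real (m j)" if j: "j \<in> {1..d}" for j
  proof -
    have mj: "real (m j) > 0" using m j by force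
    have "c / (2 * real (m j)) \<le> w {j} / (2 * real (m j))"
      using wc[OF j] mj by (simp add: divide_right_mono)
    also have "\<dots> \<le> weighted_star_disc w d (centered_grid d m) a"
      using w m j by (rule weight_div_le_weighted_star_disc_centered_grid)
    also have "\<dots> \<le> \<epsilon>" by (rule disc)
    finally show ?thesis using mj \<epsilon> by (simp add: field_simps)
  qed
  then have "(\<Prod>j\<in>{1..d}. c / (2 * \<epsilon>)) \<le> (\<Prod>j\<in>{1..d}. real (m j))"
    using c \<epsilon> by (intro prod_mono) auto
  then show ?thesis unfolding N_grid_def NS_def[symmetric] N by simp
qed

lemma curse_of_dimI:
  assumes "C > 0" "\<epsilon>\<^sub>0 > 0" "\<tau> > 0"
    and "\<And>\<epsilon> d. 0 < \<epsilon> \<Longrightarrow> \<epsilon> < 1 \<Longrightarrow> \<epsilon> \<le> \<epsilon>\<^sub>0 \<Longrightarrow> d \<ge> 1 \<Longrightarrow> C * (1 + \<tau>) ^ d \<le> real (Nf \<epsilon> d)"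
  shows "curse_of_dim Nf"
proof -
  have "infinite {d. d \<ge> 1 \<and> real (Nf \<epsilon> d) \<ge> C * (1 + \<tau>) ^ d}"
    if "0 < \<epsilon>" "\<epsilon> < 1" "\<epsilon> \<le> \<epsilon>\<^sub>0" for \<epsilon>
  proof -
    have "{1..} \<subseteq> {d. d \<ge> 1 \<and> real (Nf \<epsilon> d) \<ge> C * (1 + \<tau>) ^ d}" using assms(4) that by auto
    then show ?thesis using infinite_Ici finite_subset by blast
  qed
  then show ?thesis unfolding curse_of_dim_def using assms(1-3) by blast
qed

lemma le_of_decreasing_from:
  fixes f :: "nat \<Rightarrow> 'a :: order"
  assumes "\<And>j. i \<le> j \<Longrightarrow> f (Suc j) \<le> f j" and "i \<le> j"
  shows "f j \<le> f i"
  using assms(2)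
proof (induction j rule: dec_induct)
  case (step j)
  then show ?case using assms(1)[of j] by simp
qed simp

theorem lemma2:
  fixes \<gamma> :: "nat \<Rightarrow> real" and c :: real
  assumes "\<gamma> 1 \<le> 1"
    and "\<And>j. j \<ge> 1 \<Longrightarrow> \<gamma> (Suc j) \<le> \<gamma> j"
    and "\<And>j. j \<ge> 1 \<Longrightarrow> 0 \<le> \<gamma> j"
    and "c > 0"
    and "\<And>j. j \<ge> 1 \<Longrightarrow> c \<le> \<gamma> j"
  shows "(\<forall>\<epsilon> d. 0 < \<epsilon> \<and> \<epsilon> < 1 \<and> d \<ge> 1 \<longrightarrow>
            real (N_grid (product_weights \<gamma>) \<epsilon> d) \<ge> (c / (4 * \<epsilon>)) ^ d)
         \<and> curse_of_dim (N_grid (product_weights \<gamma>))"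
proof -
  have \<gamma>_le_1: "\<gamma> j \<le> 1" if "j \<ge> 1" for j
    using le_of_decreasing_from[of 1 \<gamma> j] assms(1,2) that by fastforce
  have w: "product_weights \<gamma> u \<le> 1" if "u \<subseteq> {1..d}" for u d
    unfolding product_weights_def using that assms(3) \<gamma>_le_1 by (intro prod_le_1) auto
  have bound: "(c / (4 * \<epsilon>)) ^ d \<le> real (N_grid (product_weights \<gamma>) \<epsilon> d)"
    if "0 < \<epsilon>" "d \<ge> 1" for \<epsilon> d
  proof -
    have "(c / (4 * \<epsilon>)) ^ d \<le> (c / (2 * \<epsilon>)) ^ d"
      using that assms(4) by (intro power_mono) (auto simp: field_simps)
    also have "\<dots> \<le> real (N_grid (product_weights \<gamma>) \<epsilon> d)"
      using that assms(4,5) by (intro N_grid_ge w) (auto simp: product_weights_def)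
    finally show ?thesis .
  qed
  have "curse_of_dim (N_grid (product_weights \<gamma>))"
  proof (rule curse_of_dimI[where C = 1 and \<tau> = 1 and \<epsilon>\<^sub>0 = "c / 8"])
    fix \<epsilon> :: real and d :: nat assume \<epsilon>: "0 < \<epsilon>" "\<epsilon> \<le> c / 8" and d: "d \<ge> 1"
    have "1 * (1 + 1) ^ d \<le> (c / (4 * \<epsilon>)) ^ d"
      using \<epsilon> by (simp, intro power_mono) (auto simp: field_simps)
    also have "\<dots> \<le> real (N_grid (product_weights \<gamma>) \<epsilon> d)" using \<epsilon>(1) d by (rule bound)
    finally show "1 * (1 + 1) ^ d \<le> real (N_grid (product_weights \<gamma>) \<epsilon> d)" .
  qed (use assms(4) in auto)
  then show ?thesis using bound by auto
qed

end
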